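(* Consider a source, a destination and $M \geq 1$ relays. Let $a_{sd}$ (source to destination), $a_{si}$ (source to relay $i$) and $a_{id}$ (relay $i$ to destination), $i=1,\dots,M$, be mutually independent circularly symmetric complex Gaussian $\mathcal{CN}(0,1)$ channel gains. Let the best relay $b$ be the index maximizing $\min\{|a_{si}|^2, |a_{id}|^2\}$ over $i \in \{1,\dots,M\}$, and write $a_{sb}, a_{bd}$ for its gains. Let $\rho > 0$ be the SNR, $r \in (0, 1/2)$ the multiplexing gain, and $R = r\log\rho$ the code rate. Under the (opportunistic) decode-and-forward protocol, an outage occurs as follows: if $\tfrac12\log(1+\rho|a_{sb}|^2) > R$ (the best relay decodes), outage is the event $\tfrac12\log\bigl(1+\rho(|a_{sd}|^2+|a_{bd}|^2)\bigr) \leq R$; otherwise outage is the event $\tfrac12\log(1+\rho|a_{sd}|^2) \leq R$. Let $P_e(\rho)$ be the outage probability. Then this protocol achieves the diversity-multiplexing tradeoff $d(r) = (M+1)(1-2r)$ for $r \in (0, 1/2)$, where $d(r) = -\lim_{\rho\to\infty} \frac{\log P_e(\rho)}{\log\rho}$.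
   Context: Setting: one source transmits in the first half of the time slots, all relays and the destination listen; only the selected best relay transmits in the second half (orthogonal time slots, half duplex), and the destination combines both copies. The nodes do not use channel knowledge at the physical layer. Relay selection rule: among all relays, the best relay is the one with the largest value of $\min\{|a_{si}|^2,|a_{id}|^2\}$. *)

theory Defs
  imports "HOL-Probability.Probability"
begin

datatype chan = SD | SR nat | RD nat

definition channels :: "nat \<Rightarrow> chan set" where
  "channels M = {SD} \<union> SR ` {1..M} \<union> RD ` {1..M}"

definition CN01_density :: "complex \<Rightarrow> real" where
  "CN01_density z = exp (- (cmod z)\<^sup>2) / pi"

text \<open>Best relay: an index in 1..M maximizing min(|a_si|^2, |a_id|^2); ties broken by least index.\<close>
definition best_relay :: "nat \<Rightarrow> (nat \<Rightarrow> complex) \<Rightarrow> (nat \<Rightarrow> complex) \<Rightarrow> nat" where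
  "best_relay M asr ard =
     (LEAST i. i \<in> {1..M} \<and>
        (\<forall>j\<in>{1..M}. min ((cmod (asr j))\<^sup>2) ((cmod (ard j))\<^sup>2)
                    \<le> min ((cmod (asr i))\<^sup>2) ((cmod (ard i))\<^sup>2)))"

definition df_outage :: "nat \<Rightarrow> real \<Rightarrow> real \<Rightarrow> (chan \<Rightarrow> complex) \<Rightarrow> bool" where
  "df_outage M \<rho> R a =
     (let b = best_relay M (\<lambda>i. a (SR i)) (\<lambda>i. a (RD i)) in
      if ln (1 + \<rho> * (cmod (a (SR b)))\<^sup>2) / 2 > R
      then ln (1 + \<rho> * ((cmod (a SD))\<^sup>2 + (cmod (a (RD b)))\<^sup>2)) / 2 \<le> R
      else ln (1 + \<rho> * (cmod (a SD))\<^sup>2) / 2 \<le> R)"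

end

theory Submission
  imports Defs "HOL-Real_Asymp.Real_Asymp"
begin

text \<open>Write t(\<rho>) = (\<rho> powr (2 r) - 1) / \<rho>, of order \<rho> powr (2 r - 1). Every outage condition
  ln (1 + \<rho> x) / 2 \<le> r ln \<rho> reads x \<le> t(\<rho>), and a CN(0,1) gain is weak, i.e.
  |a|^2 \<le> t, with probability between t/6 and 2t. Outage occurs when the direct link and all
  source-relay links are weak. Conversely, outage forces the direct link to be weak and
  min(|a_sb|^2, |a_bd|^2) \<le> t for the selected relay b, hence, by the selection rule, one of
  the two links of every relay to be weak. Both events are built from intersections of M + 1
  independent weak-link events, so P_e(\<rho>) lies within constant factors of t(\<rho>) ^ (M + 1),
  and - ln P_e / ln \<rho> tends to (M + 1)(1 - 2 r).\<close>

lemma emeasure_lborel_complex_square: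
  fixes c :: real
  assumes "0 \<le> c"
  shows "emeasure lborel (cbox (Complex (-c) (-c)) (Complex c c)) = ennreal ((2 * c)\<^sup>2)"
  using assms by (simp add: emeasure_lborel_cbox_eq Basis_complex_def power2_eq_square ennreal_mult)

lemma disc_subset_complex_square:
  fixes c :: real
  assumes "0 \<le> c"
  shows "{z. (cmod z)\<^sup>2 \<le> c\<^sup>2} \<subseteq> cbox (Complex (-c) (-c)) (Complex c c)"
proof
  fix z :: complex
  assume "z \<in> {z. (cmod z)\<^sup>2 \<le> c\<^sup>2}"
  then have "(Re z)\<^sup>2 \<le> c\<^sup>2" "(Im z)\<^sup>2 \<le> c\<^sup>2"
    by (auto simp: cmod_power2 intro: order_trans[rotated])
  then have "\<bar>Re z\<bar> \<le> c" "\<bar>Im z\<bar> \<le> c"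
    using assms abs_le_square_iff[of "Re z" c] abs_le_square_iff[of "Im z" c] by simp_all
  then show "z \<in> cbox (Complex (-c) (-c)) (Complex c c)"
    by (auto simp: cbox_complex_eq)
qed

lemma complex_square_subset_disc:
  fixes c :: real
  shows "cbox (Complex (-c) (-c)) (Complex c c) \<subseteq> {z. (cmod z)\<^sup>2 \<le> 2 * c\<^sup>2}"
proof
  fix z :: complex
  assume "z \<in> cbox (Complex (-c) (-c)) (Complex c c)"
  then have "\<bar>Re z\<bar> \<le> \<bar>c\<bar>" "\<bar>Im z\<bar> \<le> \<bar>c\<bar>"
    by (auto simp: cbox_complex_eq)
  then have "(Re z)\<^sup>2 \<le> c\<^sup>2" "(Im z)\<^sup>2 \<le> c\<^sup>2"
    by (auto simp: abs_le_square_iff)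
  then show "z \<in> {z. (cmod z)\<^sup>2 \<le> 2 * c\<^sup>2}"
    by (simp add: cmod_power2)
qed

lemma CN01_density_le: "CN01_density z \<le> 1 / pi"
  unfolding CN01_density_def by (simp add: divide_right_mono)

lemma CN01_density_ge:
  assumes "(cmod z)\<^sup>2 \<le> s"
  shows "exp (- s) / pi \<le> CN01_density z"
  unfolding CN01_density_def using assms by (simp add: divide_right_mono)

text \<open>The constants come from the squares inscribed in and circumscribed about the disc.\<close>

lemma nn_integral_CN01_disc_le:
  assumes "0 \<le> s"
  shows "(\<integral>\<^sup>+z. ennreal (CN01_density z) * indicator {z. (cmod z)\<^sup>2 \<le> s} z \<partial>lborel) \<le> ennreal (4 * s / pi)"
proof -
  define Q where "Q = cbox (Complex (- sqrt s) (- sqrt s)) (Complex (sqrt s) (sqrt s))"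
  have "{z. (cmod z)\<^sup>2 \<le> s} \<subseteq> Q"
    using disc_subset_complex_square[of "sqrt s"] assms by (simp add: Q_def)
  then have "(\<integral>\<^sup>+z. ennreal (CN01_density z) * indicator {z. (cmod z)\<^sup>2 \<le> s} z \<partial>lborel)
      \<le> (\<integral>\<^sup>+z. ennreal (1 / pi) * indicator Q z \<partial>lborel)"
    by (intro nn_integral_mono) (auto split: split_indicator intro: ennreal_leI CN01_density_le)
  also have "\<dots> = ennreal (1 / pi) * ennreal ((2 * sqrt s)\<^sup>2)"
    using assms by (subst nn_integral_cmult_indicator) (auto simp: Q_def emeasure_lborel_complex_square)
  also have "\<dots> = ennreal (4 * s / pi)"
    using assms by (simp add: ennreal_mult[symmetric] power_mult_distrib)
  finally show ?thesis .
qed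

lemma nn_integral_CN01_disc_ge:
  assumes "0 \<le> s"
  shows "ennreal (2 * s * exp (- s) / pi) \<le> (\<integral>\<^sup>+z. ennreal (CN01_density z) * indicator {z. (cmod z)\<^sup>2 \<le> s} z \<partial>lborel)"
proof -
  define Q where "Q = cbox (Complex (- sqrt (s / 2)) (- sqrt (s / 2))) (Complex (sqrt (s / 2)) (sqrt (s / 2)))"
  have Q_disc: "Q \<subseteq> {z. (cmod z)\<^sup>2 \<le> s}"
    using complex_square_subset_disc[of "sqrt (s / 2)"] assms by (simp add: Q_def)
  have "ennreal (2 * s * exp (- s) / pi) = ennreal (exp (- s) / pi) * ennreal ((2 * sqrt (s / 2))\<^sup>2)"
    using assms by (simp add: ennreal_mult[symmetric] power_mult_distrib)
  also have "\<dots> = (\<integral>\<^sup>+z. ennreal (exp (- s) / pi) * indicator Q z \<partial>lborel)"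
    using assms by (subst nn_integral_cmult_indicator) (auto simp: Q_def emeasure_lborel_complex_square)
  also have "\<dots> \<le> (\<integral>\<^sup>+z. ennreal (CN01_density z) * indicator {z. (cmod z)\<^sup>2 \<le> s} z \<partial>lborel)"
    using Q_disc by (intro nn_integral_mono)
      (auto split: split_indicator intro: ennreal_leI CN01_density_ge)
  finally show ?thesis .
qed

lemma CN01_small_ball:
  assumes "prob_space P" "distributed P lborel X (\<lambda>z. ennreal (CN01_density z))"
    and "0 \<le> s" "s \<le> 1"
  shows "s / 6 \<le> measure P {\<omega> \<in> space P. (cmod (X \<omega>))\<^sup>2 \<le> s}"
    and "measure P {\<omega> \<in> space P. (cmod (X \<omega>))\<^sup>2 \<le> s} \<le> 2 * s"
proof -
  interpret prob_space P by fact
  have "{z::complex. (cmod z)\<^sup>2 \<le> s} \<in> sets lborel"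
    by simp
  then have "emeasure P (X -` {z. (cmod z)\<^sup>2 \<le> s} \<inter> space P)
      = (\<integral>\<^sup>+z. ennreal (CN01_density z) * indicator {z. (cmod z)\<^sup>2 \<le> s} z \<partial>lborel)"
    by (rule distributed_emeasure[OF assms(2)])
  moreover have "X -` {z. (cmod z)\<^sup>2 \<le> s} \<inter> space P = {\<omega> \<in> space P. (cmod (X \<omega>))\<^sup>2 \<le> s}"
    by auto
  ultimately have ball: "ennreal (prob {\<omega> \<in> space P. (cmod (X \<omega>))\<^sup>2 \<le> s})
      = (\<integral>\<^sup>+z. ennreal (CN01_density z) * indicator {z. (cmod z)\<^sup>2 \<le> s} z \<partial>lborel)"
    by (simp add: emeasure_eq_measure)
  have "prob {\<omega> \<in> space P. (cmod (X \<omega>))\<^sup>2 \<le> s} \<le> 4 * s / pi"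
    using nn_integral_CN01_disc_le[OF assms(3)] assms(3) by (simp add: ball[symmetric])
  also have "\<dots> \<le> 2 * s"
    using pi_gt3 assms(3) mult_right_mono[of 2 pi s] by (simp add: field_simps mult.commute)
  finally show "prob {\<omega> \<in> space P. (cmod (X \<omega>))\<^sup>2 \<le> s} \<le> 2 * s" .
  have "exp (- 1) \<le> exp (- s)"
    using assms(4) by simp
  moreover have "1 / 3 \<le> exp (- 1 :: real)"
    using exp_le by (simp add: exp_minus field_simps)
  ultimately have "1 \<le> 3 * exp (- s)"
    by linarith
  then have "s / 6 \<le> 2 * s * exp (- s) / 4"
    using mult_left_mono[of 1 "3 * exp (- s)" s] assms(3) by simp
  also have "\<dots> \<le> 2 * s * exp (- s) / pi"
    using pi_less_4 pi_gt_zero assms(3) by (intro divide_left_mono) auto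
  also have "\<dots> \<le> prob {\<omega> \<in> space P. (cmod (X \<omega>))\<^sup>2 \<le> s}"
    using nn_integral_CN01_disc_ge[OF assms(3)] by (simp add: ball[symmetric])
  finally show "s / 6 \<le> prob {\<omega> \<in> space P. (cmod (X \<omega>))\<^sup>2 \<le> s}" .
qed

definition outage_threshold :: "real \<Rightarrow> real \<Rightarrow> real" where
  "outage_threshold r \<rho> = (\<rho> powr (2 * r) - 1) / \<rho>"

lemma half_ln_le_iff_outage_threshold:
  assumes "0 < \<rho>" "0 \<le> x"
  shows "ln (1 + \<rho> * x) / 2 \<le> r * ln \<rho> \<longleftrightarrow> x \<le> outage_threshold r \<rho>"
proof -
  have "ln (1 + \<rho> * x) / 2 \<le> r * ln \<rho> \<longleftrightarrow> ln (1 + \<rho> * x) \<le> ln (\<rho> powr (2 * r))"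
    using assms by (simp add: ln_powr mult_ac)
  also have "\<dots> \<longleftrightarrow> 1 + \<rho> * x \<le> \<rho> powr (2 * r)"
    using assms by (intro ln_le_cancel_iff) (auto intro: add_pos_nonneg)
  also have "\<dots> \<longleftrightarrow> x \<le> outage_threshold r \<rho>"
    using assms by (simp add: outage_threshold_def field_simps)
  finally show ?thesis .
qed

lemma best_relay_spec:
  assumes "1 \<le> M"
  shows "best_relay M u v \<in> {1..M} \<and>
    (\<forall>j\<in>{1..M}. min ((cmod (u j))\<^sup>2) ((cmod (v j))\<^sup>2)
                \<le> min ((cmod (u (best_relay M u v)))\<^sup>2) ((cmod (v (best_relay M u v)))\<^sup>2))"
proof -
  define q where "q j = min ((cmod (u j))\<^sup>2) ((cmod (v j))\<^sup>2)" for j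
  have "Max (q ` {1..M}) \<in> q ` {1..M}"
    using assms by (intro Max_in) auto
  then obtain k where k: "Max (q ` {1..M}) = q k" "k \<in> {1..M}"
    by (rule imageE)
  have "q j \<le> q k" if "j \<in> {1..M}" for j
    unfolding k(1)[symmetric] by (rule Max_ge) (use that in auto)
  with k(2) have "\<exists>i. i \<in> {1..M} \<and> (\<forall>j\<in>{1..M}. q j \<le> q i)"
    by blast
  then show ?thesis
    unfolding best_relay_def q_def[symmetric] by (rule LeastI_ex)
qed

lemma best_relay_cong:
  assumes "\<And>i. i \<in> {1..M} \<Longrightarrow> u i = u' i" "\<And>i. i \<in> {1..M} \<Longrightarrow> v i = v' i"
  shows "best_relay M u v = best_relay M u' v'"
  unfolding best_relay_def by (rule arg_cong[where f = Least]) (auto simp: assms fun_eq_iff)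

lemma df_outage_cong:
  assumes "1 \<le> M" "\<And>c. c \<in> channels M \<Longrightarrow> g c = g' c"
  shows "df_outage M \<rho> R g = df_outage M \<rho> R g'"
proof -
  have b: "best_relay M (\<lambda>i. g (SR i)) (\<lambda>i. g (RD i)) = best_relay M (\<lambda>i. g' (SR i)) (\<lambda>i. g' (RD i))"
    by (rule best_relay_cong) (auto simp: assms channels_def)
  have "best_relay M (\<lambda>i. g (SR i)) (\<lambda>i. g (RD i)) \<in> {1..M}"
    using best_relay_spec[OF assms(1)] by blast
  then show ?thesis
    unfolding df_outage_def Let_def b[symmetric] by (simp add: assms(2) channels_def)
qed

lemma sets_df_outage:
  assumes "1 \<le> M" "\<forall>c\<in>channels M. f c \<in> borel_measurable N"
  shows "{\<omega> \<in> space N. df_outage M \<rho> R (\<lambda>c. f c \<omega>)} \<in> sets N"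
proof -
  txt \<open>Only the channels of the network are read, so the gains may be extended by 0 outside
    them to make every component measurable.\<close>
  define f' where "f' c = (if c \<in> channels M then f c else (\<lambda>_. 0))" for c
  have [measurable]: "f' c \<in> borel_measurable N" for c
    using assms(2) by (simp add: f'_def)
  have [measurable]: "(\<lambda>\<omega>. best_relay M (\<lambda>i. f' (SR i) \<omega>) (\<lambda>i. f' (RD i) \<omega>)) \<in> measurable N (count_space UNIV)"
    unfolding best_relay_def by measurable
  have "{\<omega> \<in> space N. df_outage M \<rho> R (\<lambda>c. f' c \<omega>)} \<in> sets N"
    unfolding df_outage_def Let_def by measurable
  moreover have "df_outage M \<rho> R (\<lambda>c. f c \<omega>) = df_outage M \<rho> R (\<lambda>c. f' c \<omega>)" for \<omega>
    by (intro df_outage_cong[OF assms(1)]) (simp add: f'_def)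
  ultimately show ?thesis
    by simp
qed

lemma df_outage_iff_outage_threshold:
  assumes "0 < \<rho>"
  shows "df_outage M \<rho> (r * ln \<rho>) g \<longleftrightarrow>
    (let b = best_relay M (\<lambda>i. g (SR i)) (\<lambda>i. g (RD i)); t = outage_threshold r \<rho> in
     if t < (cmod (g (SR b)))\<^sup>2 then (cmod (g SD))\<^sup>2 + (cmod (g (RD b)))\<^sup>2 \<le> t
     else (cmod (g SD))\<^sup>2 \<le> t)"
proof -
  have "r * ln \<rho> < ln (1 + \<rho> * x) / 2 \<longleftrightarrow> outage_threshold r \<rho> < x" if "0 \<le> x" for x
    using half_ln_le_iff_outage_threshold[OF assms that, of r] by linarith
  then show ?thesis
    using half_ln_le_iff_outage_threshold[OF assms] unfolding df_outage_def Let_def by simp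
qed

lemma df_outage_if_source_links_weak:
  assumes "1 \<le> M" "0 < \<rho>"
    and "(cmod (g SD))\<^sup>2 \<le> outage_threshold r \<rho>"
    and "\<forall>i\<in>{1..M}. (cmod (g (SR i)))\<^sup>2 \<le> outage_threshold r \<rho>"
  shows "df_outage M \<rho> (r * ln \<rho>) g"
proof -
  define b where "b = best_relay M (\<lambda>i. g (SR i)) (\<lambda>i. g (RD i))"
  have "b \<in> {1..M}"
    using best_relay_spec[OF assms(1)] by (simp add: b_def)
  then have "\<not> outage_threshold r \<rho> < (cmod (g (SR b)))\<^sup>2"
    using assms(4) by (simp add: not_less)
  then show ?thesis
    using assms(3) unfolding df_outage_iff_outage_threshold[OF assms(2)] Let_def b_def by simp
qed

lemma df_outage_imp_weak_links:
  assumes "1 \<le> M" "0 < \<rho>" "df_outage M \<rho> (r * ln \<rho>) g"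
  shows "(cmod (g SD))\<^sup>2 \<le> outage_threshold r \<rho>"
    and "i \<in> {1..M} \<Longrightarrow> min ((cmod (g (SR i)))\<^sup>2) ((cmod (g (RD i)))\<^sup>2) \<le> outage_threshold r \<rho>"
proof -
  define t where "t = outage_threshold r \<rho>"
  define b where "b = best_relay M (\<lambda>i. g (SR i)) (\<lambda>i. g (RD i))"
  have out: "if t < (cmod (g (SR b)))\<^sup>2 then (cmod (g SD))\<^sup>2 + (cmod (g (RD b)))\<^sup>2 \<le> t
      else (cmod (g SD))\<^sup>2 \<le> t"
    using assms(3) unfolding df_outage_iff_outage_threshold[OF assms(2)] Let_def t_def b_def .
  have SD_b: "(cmod (g SD))\<^sup>2 \<le> t \<and> min ((cmod (g (SR b)))\<^sup>2) ((cmod (g (RD b)))\<^sup>2) \<le> t"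
  proof (cases "t < (cmod (g (SR b)))\<^sup>2")
    case True
    then have "(cmod (g SD))\<^sup>2 + (cmod (g (RD b)))\<^sup>2 \<le> t"
      using out by simp
    then have "(cmod (g SD))\<^sup>2 \<le> t" "(cmod (g (RD b)))\<^sup>2 \<le> t"
      using zero_le_power2[of "cmod (g SD)"] zero_le_power2[of "cmod (g (RD b))"] by linarith+
    then show ?thesis
      by (simp add: min_le_iff_disj)
  next
    case False
    then show ?thesis
      using out by (simp add: min_le_iff_disj)
  qed
  then show "(cmod (g SD))\<^sup>2 \<le> outage_threshold r \<rho>"
    by (simp add: t_def)
  assume "i \<in> {1..M}"
  then have "min ((cmod (g (SR i)))\<^sup>2) ((cmod (g (RD i)))\<^sup>2) \<le> min ((cmod (g (SR b)))\<^sup>2) ((cmod (g (RD b)))\<^sup>2)"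
    using best_relay_spec[OF assms(1), of "\<lambda>i. g (SR i)" "\<lambda>i. g (RD i)"] by (simp add: b_def)
  then show "min ((cmod (g (SR i)))\<^sup>2) ((cmod (g (RD i)))\<^sup>2) \<le> outage_threshold r \<rho>"
    using SD_b unfolding t_def by (blast intro: order.trans)
qed

text \<open>One link of every source-destination path: the relays in S are cut off from the source,
  the others from the destination.\<close>

definition relay_cut :: "nat \<Rightarrow> nat set \<Rightarrow> chan set" where
  "relay_cut M S = insert SD (SR ` S \<union> RD ` ({1..M} - S))"

lemma finite_channels: "finite (channels M)"
  by (simp add: channels_def)

lemma relay_cut_nonempty: "relay_cut M S \<noteq> {}"
  by (simp add: relay_cut_def)

lemma relay_cut_subset_channels: "S \<subseteq> {1..M} \<Longrightarrow> relay_cut M S \<subseteq> channels M"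
  by (auto simp: relay_cut_def channels_def)

lemma card_relay_cut:
  assumes "S \<subseteq> {1..M}"
  shows "card (relay_cut M S) = M + 1"
proof -
  have "finite S"
    using assms finite_subset by blast
  have "card (SR ` S \<union> RD ` ({1..M} - S)) = card S + (M - card S)"
    using \<open>finite S\<close> assms
    by (subst card_Un_disjoint) (auto simp: card_image inj_on_def card_Diff_subset)
  moreover have "card S \<le> M"
    using card_mono[OF _ assms] by simp
  ultimately show ?thesis
    unfolding relay_cut_def using \<open>finite S\<close> by (subst card_insert_disjoint) auto
qed

lemma (in prob_space) prob_INT_indep_vars:
  assumes "indep_vars N X I" "J \<subseteq> I" "finite J" "J \<noteq> {}" "\<And>i. i \<in> J \<Longrightarrow> B i \<in> sets (N i)"
  shows "prob (\<Inter>i\<in>J. X i -` B i \<inter> space M) = (\<Prod>i\<in>J. prob (X i -` B i \<inter> space M))"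
  using assms(1) unfolding indep_vars_def2
  by (intro indep_setsD[of _ I]) (use assms(2-5) in auto)

locale relay_network = prob_space P for P :: "'w measure" +
  fixes M :: nat and a :: "chan \<Rightarrow> 'w \<Rightarrow> complex"
  assumes relays: "1 \<le> M"
    and indep: "indep_vars (\<lambda>_. borel) a (channels M)"
    and gains_CN01: "\<forall>c\<in>channels M. distributed P lborel (a c) (\<lambda>z. ennreal (CN01_density z))"
begin

definition weak_link :: "real \<Rightarrow> chan \<Rightarrow> 'w set" where
  "weak_link t c = {\<omega> \<in> space P. (cmod (a c \<omega>))\<^sup>2 \<le> t}"

lemma gain_measurable: "c \<in> channels M \<Longrightarrow> a c \<in> borel_measurable P"
  using indep unfolding indep_vars_def2 by simp

lemma weak_link_in_events: "c \<in> channels M \<Longrightarrow> weak_link t c \<in> events"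
  using gain_measurable unfolding weak_link_def by measurable

lemma weak_link_eq_preimage: "weak_link t c = a c -` {z. (cmod z)\<^sup>2 \<le> t} \<inter> space P"
  by (auto simp: weak_link_def)

lemma prob_weak_links:
  assumes "J \<subseteq> channels M" "J \<noteq> {}" "0 \<le> t" "t \<le> 1"
  shows "(t / 6) ^ card J \<le> prob (\<Inter>c\<in>J. weak_link t c)"
    and "prob (\<Inter>c\<in>J. weak_link t c) \<le> (2 * t) ^ card J"
proof -
  have "finite J"
    using assms(1) finite_channels by (rule finite_subset)
  have indep_prod: "prob (\<Inter>c\<in>J. weak_link t c) = (\<Prod>c\<in>J. prob (weak_link t c))"
    unfolding weak_link_eq_preimage
    by (rule prob_INT_indep_vars[OF indep assms(1) \<open>finite J\<close> assms(2)]) simp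
  note small_ball = CN01_small_ball[OF prob_space_axioms _ assms(3,4)]
  have "(t / 6) ^ card J = (\<Prod>c\<in>J. t / 6)"
    by simp
  also have "\<dots> \<le> (\<Prod>c\<in>J. prob (weak_link t c))"
    using assms gains_CN01 small_ball(1) by (intro prod_mono) (auto simp: weak_link_def)
  finally show "(t / 6) ^ card J \<le> prob (\<Inter>c\<in>J. weak_link t c)"
    by (simp add: indep_prod)
  have "(\<Prod>c\<in>J. prob (weak_link t c)) \<le> (\<Prod>c\<in>J. 2 * t)"
    using assms gains_CN01 small_ball(2) by (intro prod_mono) (auto simp: weak_link_def)
  then show "prob (\<Inter>c\<in>J. weak_link t c) \<le> (2 * t) ^ card J"
    by (simp add: indep_prod)
qed

lemma outage_in_events: "{\<omega> \<in> space P. df_outage M \<rho> R (\<lambda>c. a c \<omega>)} \<in> events"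
  by (intro sets_df_outage relays ballI gain_measurable)

lemma prob_outage_ge:
  assumes "0 < \<rho>" "0 \<le> outage_threshold r \<rho>" "outage_threshold r \<rho> \<le> 1"
  shows "(outage_threshold r \<rho> / 6) ^ (M + 1)
    \<le> prob {\<omega> \<in> space P. df_outage M \<rho> (r * ln \<rho>) (\<lambda>c. a c \<omega>)}"
proof -
  define t where "t = outage_threshold r \<rho>"
  define J where "J = relay_cut M {1..M}"
  have J: "J \<subseteq> channels M" "J \<noteq> {}" "card J = M + 1"
    unfolding J_def by (simp_all add: relay_cut_subset_channels relay_cut_nonempty card_relay_cut)
  have "(\<Inter>c\<in>J. weak_link t c) \<subseteq> {\<omega> \<in> space P. df_outage M \<rho> (r * ln \<rho>) (\<lambda>c. a c \<omega>)}"
    using df_outage_if_source_links_weak[OF relays assms(1)]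
    by (auto simp: J_def relay_cut_def weak_link_def t_def)
  then have "prob (\<Inter>c\<in>J. weak_link t c) \<le> prob {\<omega> \<in> space P. df_outage M \<rho> (r * ln \<rho>) (\<lambda>c. a c \<omega>)}"
    by (intro finite_measure_mono outage_in_events)
  then show ?thesis
    using prob_weak_links(1)[OF J(1,2), of t] assms J(3) by (simp add: t_def)
qed

lemma prob_outage_le:
  assumes "0 < \<rho>" "0 \<le> outage_threshold r \<rho>" "outage_threshold r \<rho> \<le> 1"
  shows "prob {\<omega> \<in> space P. df_outage M \<rho> (r * ln \<rho>) (\<lambda>c. a c \<omega>)}
    \<le> 2 ^ M * (2 * outage_threshold r \<rho>) ^ (M + 1)"
proof -
  define t where "t = outage_threshold r \<rho>"
  define C where "C S = (\<Inter>c\<in>relay_cut M S. weak_link t c)" for S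
  have C_events: "C S \<in> events" if "S \<subseteq> {1..M}" for S
    unfolding C_def using relay_cut_subset_channels[OF that]
    by (intro sets.finite_INT weak_link_in_events)
      (auto intro: finite_subset[OF _ finite_channels] simp: relay_cut_nonempty)
  have "{\<omega> \<in> space P. df_outage M \<rho> (r * ln \<rho>) (\<lambda>c. a c \<omega>)} \<subseteq> (\<Union>S\<in>Pow {1..M}. C S)"
  proof
    fix \<omega> assume \<omega>: "\<omega> \<in> {\<omega> \<in> space P. df_outage M \<rho> (r * ln \<rho>) (\<lambda>c. a c \<omega>)}"
    define S where "S = {i \<in> {1..M}. (cmod (a (SR i) \<omega>))\<^sup>2 \<le> t}"
    have "\<omega> \<in> C S"
      using \<omega> df_outage_imp_weak_links[OF relays assms(1), of r "\<lambda>c. a c \<omega>"]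
      by (force simp: C_def relay_cut_def weak_link_def S_def t_def min_le_iff_disj)
    then show "\<omega> \<in> (\<Union>S\<in>Pow {1..M}. C S)"
      by (auto simp: S_def)
  qed
  then have "prob {\<omega> \<in> space P. df_outage M \<rho> (r * ln \<rho>) (\<lambda>c. a c \<omega>)} \<le> prob (\<Union>S\<in>Pow {1..M}. C S)"
    using C_events by (intro finite_measure_mono) auto
  also have "\<dots> \<le> (\<Sum>S\<in>Pow {1..M}. prob (C S))"
    using C_events by (intro finite_measure_subadditive_finite) auto
  also have "\<dots> \<le> (\<Sum>S\<in>Pow {1..M}. (2 * t) ^ (M + 1))"
  proof (rule sum_mono)
    fix S assume "S \<in> Pow {1..M}"
    then have S: "S \<subseteq> {1..M}"
      by simp
    show "prob (C S) \<le> (2 * t) ^ (M + 1)"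
      using prob_weak_links(2)[OF relay_cut_subset_channels[OF S] relay_cut_nonempty, of t] assms
      unfolding C_def card_relay_cut[OF S] t_def by simp
  qed
  also have "\<dots> = 2 ^ M * (2 * t) ^ (M + 1)"
    by (simp add: card_Pow)
  finally show ?thesis
    by (simp add: t_def)
qed

end

lemma tendsto_neg_ln_div_ln_of_power_bounds:
  fixes f t :: "real \<Rightarrow> real"
  assumes "0 < c" "0 < C"
    and bounds: "\<forall>\<^sub>F x in at_top. 0 < t x \<and> c * t x ^ k \<le> f x \<and> f x \<le> C * t x ^ k"
    and t_exponent: "((\<lambda>x. ln (t x) / ln x) \<longlongrightarrow> e) at_top"
  shows "((\<lambda>x. - ln (f x) / ln x) \<longlongrightarrow> - (real k * e)) at_top"
proof -
  define lo where "lo x = - ln C * (1 / ln x) - real k * (ln (t x) / ln x)" for x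
  define hi where "hi x = - ln c * (1 / ln x) - real k * (ln (t x) / ln x)" for x
  have inv_ln: "((\<lambda>x::real. 1 / ln x) \<longlongrightarrow> 0) at_top"
    by real_asymp
  have "(lo \<longlongrightarrow> - ln C * 0 - real k * e) at_top" "(hi \<longlongrightarrow> - ln c * 0 - real k * e) at_top"
    unfolding lo_def hi_def by (intro tendsto_diff tendsto_mult tendsto_const inv_ln t_exponent)+
  then have lo_hi: "(lo \<longlongrightarrow> - (real k * e)) at_top" "(hi \<longlongrightarrow> - (real k * e)) at_top"
    by simp_all
  have "\<forall>\<^sub>F x in at_top. lo x \<le> - ln (f x) / ln x \<and> - ln (f x) / ln x \<le> hi x"
    using bounds eventually_gt_at_top[of 1]
  proof eventually_elim
    case (elim x)
    have pos: "0 < c * t x ^ k" "0 < C * t x ^ k" "0 < ln x"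
      using elim assms(1,2) by auto
    then have "0 < f x"
      using elim by linarith
    have ln_power: "ln (d * t x ^ k) = ln d + real k * ln (t x)" if "0 < d" for d
      using that elim by (simp add: ln_mult ln_realpow)
    have lower: "ln c + real k * ln (t x) \<le> ln (f x)"
      using pos \<open>0 < f x\<close> elim by (simp flip: ln_power[OF assms(1)])
    have upper: "ln (f x) \<le> ln C + real k * ln (t x)"
      using pos \<open>0 < f x\<close> elim by (simp flip: ln_power[OF assms(2)])
    have "lo x = (- ln C - real k * ln (t x)) / ln x"
      unfolding lo_def by (simp add: diff_divide_distrib)
    also have "\<dots> \<le> - ln (f x) / ln x"
      by (rule divide_right_mono) (use upper pos(3) in linarith)+
    finally have "lo x \<le> - ln (f x) / ln x" .
    have "- ln (f x) / ln x \<le> (- ln c - real k * ln (t x)) / ln x"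
      by (rule divide_right_mono) (use lower pos(3) in linarith)+
    also have "\<dots> = hi x"
      unfolding hi_def by (simp add: diff_divide_distrib)
    finally show ?case
      using \<open>lo x \<le> - ln (f x) / ln x\<close> by blast
  qed
  then show ?thesis
    by (intro tendsto_sandwich[OF _ _ lo_hi]) (auto elim: eventually_mono)
qed

theorem theorem3:
  fixes P :: "'w measure" and a :: "chan \<Rightarrow> 'w \<Rightarrow> complex"
    and M :: nat and r :: real and Pe :: "real \<Rightarrow> real"
  assumes "prob_space P"
    and "M \<ge> 1"
    and "prob_space.indep_vars P (\<lambda>_. borel) a (channels M)"
    and "\<forall>c\<in>channels M. distributed P lborel (a c) (\<lambda>z. ennreal (CN01_density z))"
    and "0 < r" and "r < 1/2"
    and "\<forall>\<rho>>0. Pe \<rho> = measure P {\<omega> \<in> space P. df_outage M \<rho> (r * ln \<rho>) (\<lambda>c. a c \<omega>)}"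
  shows "((\<lambda>\<rho>. - ln (Pe \<rho>) / ln \<rho>) \<longlongrightarrow> real (M + 1) * (1 - 2 * r)) at_top"
proof -
  interpret relay_network P M a
    using assms(1-4) by (simp add: relay_network_def relay_network_axioms_def)
  define t where "t = outage_threshold r"
  have t_exponent: "((\<lambda>\<rho>. ln (t \<rho>) / ln \<rho>) \<longlongrightarrow> 2 * r - 1) at_top"
    unfolding t_def outage_threshold_def using assms(5,6) by real_asymp
  have "\<forall>\<^sub>F \<rho> in at_top. 0 < t \<rho>" "\<forall>\<^sub>F \<rho> in at_top. t \<rho> \<le> 1"
    unfolding t_def outage_threshold_def using assms(5,6) by real_asymp+
  then have "\<forall>\<^sub>F \<rho> in at_top.
      0 < t \<rho> \<and> (1 / 6) ^ (M + 1) * t \<rho> ^ (M + 1) \<le> Pe \<rho> \<and> Pe \<rho> \<le> 2 ^ M * 2 ^ (M + 1) * t \<rho> ^ (M + 1)"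
    using eventually_gt_at_top[of 0]
  proof eventually_elim
    case (elim \<rho>)
    then show ?case
      using prob_outage_ge[of \<rho> r] prob_outage_le[of \<rho> r] assms(7)
      by (simp add: t_def power_mult_distrib power_divide mult_ac)
  qed
  then have "((\<lambda>\<rho>. - ln (Pe \<rho>) / ln \<rho>) \<longlongrightarrow> - (real (M + 1) * (2 * r - 1))) at_top"
    by (rule tendsto_neg_ln_div_ln_of_power_bounds[rotated 2, OF _ t_exponent]) simp_all
  then show ?thesis
    by (simp add: algebra_simps)
qed

end
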